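(* Let $p$ be an odd prime, $n\ge1$, and let $f:V(K_n)\to\{1,\dots,n\}$ be any bijection on the vertex set of the complete graph $K_n$. Put $q=\lfloor n/p\rfloor$, $r=n-qp$, $\psi=\max\{0,2r-p+1\}$, $\delta_s=1$ if $s$ is even and $0$ otherwise, and $\mathcal S=\mathcal S_1+\mathcal S_2$ with $$\mathcal S_1=\sum_{\substack{s=2\\ s\ne p}}^{r+1}(s-1-\delta_s)(s/p),\qquad \mathcal S_2=\sum_{\substack{s=r+2\\ s\ne p}}^{2r}(2r-s+1-\delta_s)(s/p).$$ Then, with $e_{f_p^*}(i)$ the number of edges of $K_n$ with label $i$ under the induced edge labeling $f_p^*$, $$e_{f_p^*}(0)-e_{f_p^*}(1)=\tfrac12\left(2nq-pq^2-q+\psi\right)-\tfrac12\,\mathcal S .$$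
   Context: For an odd prime $p$ and an integer $a$ not divisible by $p$, $(a/p)$ denotes the Legendre symbol: $1$ if $a$ is a quadratic residue mod $p$, $-1$ otherwise. Empty sums equal $0$. Given a graph $G$ of order $n$ and a bijection $f:V(G)\to\{1,\dots,n\}$, the induced edge labeling $f_p^*:E(G)\to\{0,1\}$ is defined by $f_p^*(uv)=0$ if $p\mid f(u)+f(v)$ or $((f(u)+f(v))/p)=-1$, and $f_p^*(uv)=1$ if $((f(u)+f(v))/p)=1$; $e_{f_p^*}(i)$ is the number of edges with label $i$. *)

theory Defs
  imports "HOL-Number_Theory.Number_Theory"
begin

definition complete_edges :: "'a set \<Rightarrow> 'a set set" where
  "complete_edges V = {{u, v} | u v. u \<in> V \<and> v \<in> V \<and> u \<noteq> v}"

definition edge_label :: "nat \<Rightarrow> ('a \<Rightarrow> nat) \<Rightarrow> 'a set \<Rightarrow> nat" where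
  "edge_label p f e =
     (let s = int (sum f e) in
      if int p dvd s \<or> Legendre s (int p) = -1 then 0 else 1)"

definition edge_count :: "nat \<Rightarrow> ('a \<Rightarrow> nat) \<Rightarrow> 'a set \<Rightarrow> nat \<Rightarrow> nat" where
  "edge_count p f V i = card {e \<in> complete_edges V. edge_label p f e = i}"

end

theory Submission
  imports Defs
begin

text \<open>Give an edge {u, v} the sign w(f u + f v), where w(s) = [p dvd s] - (s/p) is +1 for label 0
  and -1 for label 1. Then e(0) - e(1) is the sum of w(a + b) over 1 \<le> a < b \<le> n. The weight w
  is p-periodic and, because the Legendre symbol is multiplicative and sums to 0 over a period,
  both w and a \<mapsto> w(2a) sum to 1 over a period. Hence twice the pair sum grows by 2n + p - 1
  when n grows by p, which reduces everything to n = r < p. There, grouping the pairs by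
  s = a + b, the only multiple of p in range is s = p, whose coefficient is \<psi>, and the
  remaining values of s contribute -S.\<close>

lemma sum_sign_eq_card_diff:
  assumes "finite A"
  shows "(\<Sum>x\<in>A. if P x then 1 else -1 :: int) = int (card {x\<in>A. P x}) - int (card {x\<in>A. \<not> P x})"
  using assms by (simp add: sum.If_cases Int_def conj_commute)

lemma Legendre_cong:
  assumes "[a = b] (mod m)"
  shows "Legendre a m = Legendre b m"
proof -
  have "[a = c] (mod m) \<longleftrightarrow> [b = c] (mod m)" "[c = a] (mod m) \<longleftrightarrow> [c = b] (mod m)" for c
    using assms cong_sym cong_trans by blast+
  then show ?thesis
    unfolding Legendre_def QuadRes_def by simp
qed

lemma Legendre_eq_0_iff: "Legendre a m = 0 \<longleftrightarrow> m dvd a"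
  unfolding Legendre_def by (auto simp: cong_0_iff)

lemma Legendre_cases: "Legendre a m \<in> {-1, 0, 1}"
  unfolding Legendre_def by auto

lemma Legendre_mult:
  assumes "prime p" "2 < p"
  shows "Legendre (a * b) (int p) = Legendre a (int p) * Legendre b (int p)"
proof -
  let ?k = "(p - 1) div 2" and ?L = "\<lambda>x. Legendre x (int p)"
  have "[?L (a * b) = (a * b) ^ ?k] (mod p)" "[?L a * ?L b = a ^ ?k * b ^ ?k] (mod p)"
    using euler_criterion[OF assms] cong_mult by blast+
  then have "[?L (a * b) = ?L a * ?L b] (mod p)"
    by (metis cong_sym cong_trans power_mult_distrib)
  then have "int p dvd ?L (a * b) - ?L a * ?L b"
    by (simp add: cong_iff_dvd_diff)
  moreover have "?L (a * b) - ?L a * ?L b \<in> {-2, -1, 0, 1, 2}"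
    using Legendre_cases[of "a * b" "int p"] Legendre_cases[of a "int p"] Legendre_cases[of b "int p"]
    by auto
  moreover have "\<not> int p dvd 2" "\<not> int p dvd 1"
    using assms by (auto dest: zdvd_imp_le)
  ultimately show ?thesis
    by auto
qed

lemma inj_on_square_mod:
  fixes P :: int
  assumes "prime P"
  shows "inj_on (\<lambda>x. x\<^sup>2 mod P) {1..(P - 1) div 2}"
proof (rule inj_onI)
  fix x y assume xy: "x \<in> {1..(P - 1) div 2}" "y \<in> {1..(P - 1) div 2}" "x\<^sup>2 mod P = y\<^sup>2 mod P"
  then have "P dvd x\<^sup>2 - y\<^sup>2"
    by (simp add: mod_eq_dvd_iff)
  also have "x\<^sup>2 - y\<^sup>2 = (x - y) * (x + y)"
    by (simp add: power2_eq_square algebra_simps)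
  finally have "P dvd (x - y) * (x + y)" .
  moreover have "\<not> P dvd x + y"
    using xy by (auto dest: zdvd_imp_le)
  ultimately have "P dvd x - y"
    using assms prime_dvd_multD by blast
  with xy show "x = y"
    using dvd_imp_le_int[of "x - y" P] by fastforce
qed

lemma image_square_mod_eq_QuadRes:
  fixes P :: int
  assumes "prime P" "odd P"
  shows "(\<lambda>x. x\<^sup>2 mod P) ` {1..(P - 1) div 2} = {s \<in> {1..<P}. QuadRes P s}"
    (is "?sq ` {1..?k} = _")
proof -
  have P: "P = 2 * ?k + 1" "0 < P"
    using assms prime_ge_2_int[of P] by (auto elim!: oddE)
  show ?thesis
  proof (intro equalityI subsetI)
    fix s assume "s \<in> ?sq ` {1..?k}"
    then obtain x where x: "x \<in> {1..?k}" "s = ?sq x"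
      by blast
    have "\<not> P dvd x"
      using x P by (auto dest: zdvd_imp_le)
    then have "\<not> P dvd x\<^sup>2"
      using assms(1) prime_dvd_power by blast
    then have "s \<noteq> 0"
      using x by (simp add: dvd_eq_mod_eq_0)
    moreover have "0 \<le> s" "s < P" "[x\<^sup>2 = s] (mod P)"
      using x(2) P(2) by (simp_all add: cong_def)
    ultimately show "s \<in> {s \<in> {1..<P}. QuadRes P s}"
      unfolding QuadRes_def by auto
  next
    fix s assume "s \<in> {s \<in> {1..<P}. QuadRes P s}"
    then obtain y where s: "1 \<le> s" "s < P" and y: "[y\<^sup>2 = s] (mod P)"
      unfolding QuadRes_def by auto
    define z where "z = y mod P"
    have z: "[z\<^sup>2 = s] (mod P)"
      using y unfolding z_def cong_def by (simp add: power_mod)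
    moreover have "[(P - z)\<^sup>2 = (- z)\<^sup>2] (mod P)"
      by (intro cong_pow) (simp add: cong_iff_dvd_diff)
    ultimately have "[(P - z)\<^sup>2 = s] (mod P)"
      by (auto intro: cong_trans)
    with z have sq_z: "?sq z = s" "?sq (P - z) = s"
      using s unfolding cong_def by simp_all
    have "z \<noteq> 0"
    proof
      assume "z = 0"
      with z have "[s = 0] (mod P)"
        by (simp add: cong_sym_eq)
      with s show False
        by (auto simp: cong_def)
    qed
    moreover have "0 \<le> z" "z < P"
      using P(2) unfolding z_def by simp_all
    ultimately have "z \<in> {1..?k} \<or> P - z \<in> {1..?k}"
      using P(1) by auto
    with sq_z show "s \<in> ?sq ` {1..?k}"
      by (metis image_eqI)
  qed
qed

lemma card_QuadRes:
  fixes P :: int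
  assumes "prime P" "odd P"
  shows "card {s \<in> {1..<P}. QuadRes P s} = nat ((P - 1) div 2)"
  using card_image[OF inj_on_square_mod[OF assms(1)]] image_square_mod_eq_QuadRes[OF assms]
  by simp

lemma sum_Legendre_eq_0:
  fixes P :: int
  assumes "prime P" "odd P"
  shows "(\<Sum>s\<in>{1..<P}. Legendre s P) = 0"
proof -
  have "(\<Sum>s\<in>{1..<P}. Legendre s P) = (\<Sum>s\<in>{1..<P}. if QuadRes P s then 1 else -1)"
    by (intro sum.cong) (auto simp: Legendre_def cong_0_iff dest: zdvd_imp_le)
  also have "\<dots> = int (card {s \<in> {1..<P}. QuadRes P s}) - int (card {s \<in> {1..<P}. \<not> QuadRes P s})"
    by (rule sum_sign_eq_card_diff) simp
  also have "card {s \<in> {1..<P}. \<not> QuadRes P s} = card ({1..<P} - {s \<in> {1..<P}. QuadRes P s})"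
    by (rule arg_cong[where f = card]) auto
  also have "\<dots> = nat (P - 1) - card {s \<in> {1..<P}. QuadRes P s}"
    by (subst card_Diff_subset) (auto intro: finite_subset[of _ "{1..<P}"])
  finally show ?thesis
    using assms card_QuadRes[OF assms] prime_ge_2_int[of P] by (auto elim!: oddE)
qed

lemma sum_Legendre_period:
  assumes "prime p" "odd p"
  shows "(\<Sum>s<p. Legendre (int s) (int p)) = 0"
proof -
  have "{..<p} = insert 0 {1..<p}"
    using prime_gt_0_nat[OF assms(1)] by auto
  then have "(\<Sum>s<p. Legendre (int s) (int p)) = (\<Sum>s\<in>{1..<p}. Legendre (int s) (int p))"
    by (simp add: Legendre_eq_0_iff)
  also have "\<dots> = (\<Sum>t\<in>{1..<int p}. Legendre t (int p))"
    using sum.reindex[of int "{1..<p}" "\<lambda>t. Legendre t (int p)"] by (simp add: image_int_atLeastLessThan)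
  also have "\<dots> = 0"
    using sum_Legendre_eq_0[of "int p"] assms by simp
  finally show ?thesis .
qed

lemma sum_periodic_interval:
  fixes g :: "nat \<Rightarrow> 'a::comm_monoid_add"
  assumes periodic: "\<And>s. g (s + p) = g s"
  shows "(\<Sum>s\<in>{m..<m + p}. g s) = (\<Sum>s<p. g s)"
proof (induction m)
  case (Suc m)
  show ?case
  proof (cases "p = 0")
    case False
    have "(\<Sum>s\<in>{Suc m..<Suc m + p}. g s) = (\<Sum>s\<in>{Suc m..<m + p}. g s) + g (m + p)"
      using False by (simp add: sum.atLeastLessThan_Suc)
    also have "\<dots> = g m + (\<Sum>s\<in>{Suc m..<m + p}. g s)"
      by (simp add: periodic add.commute)
    also have "\<dots> = (\<Sum>s\<in>{m..<m + p}. g s)"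
      using False by (simp add: sum.atLeast_Suc_lessThan)
    finally show ?thesis
      using Suc.IH by simp
  qed simp
qed (simp add: atLeast0LessThan)

lemma sum_periodic_block:
  fixes g :: "nat \<Rightarrow> 'a::comm_monoid_add"
  assumes periodic: "\<And>s. g (s + p) = g s"
  shows "(\<Sum>b\<in>{m + 1..m + p}. g (k + b)) = (\<Sum>s<p. g s)"
proof -
  have "{m + 1..m + p} = {m + 1..<m + 1 + p}"
    by auto
  then have "(\<Sum>b\<in>{m + 1..m + p}. g (k + b)) = (\<Sum>b\<in>{m + 1..<m + 1 + p}. g (b + k))"
    by (simp add: add.commute)
  also have "\<dots> = (\<Sum>s\<in>{k + m + 1..<k + m + 1 + p}. g s)"
    using sum.shift_bounds_nat_ivl[of g "m + 1" k "m + 1 + p"] by (simp add: ac_simps)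
  also have "\<dots> = (\<Sum>s<p. g s)"
    using sum_periodic_interval[of g p] periodic by blast
  finally show ?thesis .
qed

definition pair_sum :: "(nat \<Rightarrow> int) \<Rightarrow> nat \<Rightarrow> int" where
  "pair_sum g n = (\<Sum>b\<in>{1..n}. \<Sum>a\<in>{1..<b}. g (a + b))"

lemma pair_sum_0 [simp]: "pair_sum g 0 = 0"
  by (simp add: pair_sum_def)

lemma pair_sum_Suc: "pair_sum g (Suc n) = pair_sum g n + (\<Sum>a\<in>{1..n}. g (a + Suc n))"
  by (simp add: pair_sum_def atLeastLessThanSuc_atLeastAtMost)

lemma pair_sum_double:
  "2 * pair_sum g n = (\<Sum>a\<in>{1..n}. \<Sum>b\<in>{1..n}. g (a + b)) - (\<Sum>a\<in>{1..n}. g (2 * a))"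
proof (induction n)
  case (Suc n)
  have split: "(\<Sum>a\<in>{1..Suc n}. h a) = (\<Sum>a\<in>{1..n}. h a) + h (Suc n)" for h :: "nat \<Rightarrow> int"
    by simp
  have swap: "(\<Sum>b\<in>{1..n}. g (Suc n + b)) = (\<Sum>a\<in>{1..n}. g (a + Suc n))"
    by (simp add: add.commute)
  have diag: "Suc n + Suc n = 2 * Suc n"
    by simp
  have "(\<Sum>a\<in>{1..Suc n}. \<Sum>b\<in>{1..Suc n}. g (a + b))
      = (\<Sum>a\<in>{1..n}. \<Sum>b\<in>{1..n}. g (a + b)) + 2 * (\<Sum>a\<in>{1..n}. g (a + Suc n)) + g (2 * Suc n)"
    by (simp only: split sum.distrib swap diag)
  with Suc.IH show ?case
    by (simp only: pair_sum_Suc split) simp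
qed simp

lemma pair_sum_add_period:
  assumes periodic: "\<And>s. g (s + p) = g s"
  shows "2 * pair_sum g (n + p)
    = 2 * pair_sum g n + (2 * int n + int p) * (\<Sum>s<p. g s) - (\<Sum>a<p. g (2 * a))"
proof -
  let ?c = "\<Sum>s<p. g s" and ?B = "{n + 1..n + p}"
  have split: "(\<Sum>a\<in>{1..n + p}. h a) = (\<Sum>a\<in>{1..n}. h a) + (\<Sum>a\<in>?B. h a)"
    for h :: "nat \<Rightarrow> int"
    by (rule sum.ub_add_nat) simp
  have block: "(\<Sum>b\<in>?B. g (a + b)) = ?c" for a
    using sum_periodic_block[of g p] periodic by blast
  have "(\<Sum>a\<in>{1..n + p}. \<Sum>b\<in>{1..n + p}. g (a + b))
      = (\<Sum>a\<in>{1..n}. \<Sum>b\<in>{1..n}. g (a + b)) + (\<Sum>a\<in>?B. \<Sum>b\<in>{1..n}. g (a + b))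
        + (int n + int p) * ?c"
    by (simp only: split sum.distrib block) (simp add: algebra_simps)
  also have "(\<Sum>a\<in>?B. \<Sum>b\<in>{1..n}. g (a + b)) = (\<Sum>b\<in>{1..n}. \<Sum>a\<in>?B. g (b + a))"
    by (subst sum.swap) (simp only: add.commute)
  also have "\<dots> = int n * ?c"
    by (simp only: block) simp
  finally have square: "(\<Sum>a\<in>{1..n + p}. \<Sum>b\<in>{1..n + p}. g (a + b))
      = (\<Sum>a\<in>{1..n}. \<Sum>b\<in>{1..n}. g (a + b)) + (2 * int n + int p) * ?c"
    by (simp add: algebra_simps)
  have periodic_double: "g (2 * (a + p)) = g (2 * a)" for a
    using periodic[of "2 * a + p"] periodic[of "2 * a"] by (simp add: algebra_simps)
  have "(\<Sum>a\<in>?B. g (2 * a)) = (\<Sum>a<p. g (2 * a))"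
    using sum_periodic_block[where g = "\<lambda>a. g (2 * a)" and m = n and k = 0] periodic_double
    by simp
  then show ?thesis
    using pair_sum_double[of g n] pair_sum_double[of g "n + p"] square split[of "\<lambda>a. g (2 * a)"]
    by simp
qed

lemma pair_sum_add_periods:
  assumes periodic: "\<And>s. g (s + p) = g s"
  shows "2 * pair_sum g (r + q * p) = 2 * pair_sum g r
    + (2 * int q * int r + int p * int q ^ 2) * (\<Sum>s<p. g s) - int q * (\<Sum>a<p. g (2 * a))"
proof (induction q)
  case (Suc q)
  have "r + Suc q * p = (r + q * p) + p"
    by simp
  with Suc.IH show ?case
    using pair_sum_add_period[of g p "r + q * p", OF periodic]
    by (simp add: algebra_simps power2_eq_square)
qed simp

text \<open>The number of ordered pairs (a, b) with a \<noteq> b, 1 \<le> a, b \<le> r and a + b = s; the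
  correction term removes the diagonal pair (s/2, s/2).\<close>
definition pair_count :: "nat \<Rightarrow> nat \<Rightarrow> int" where
  "pair_count r s =
    (if 2 \<le> s \<and> s \<le> r + 1 then int s - 1 - (if even s then 1 else 0)
     else if r + 2 \<le> s \<and> s \<le> 2 * r then 2 * int r - int s + 1 - (if even s then 1 else 0)
     else 0)"

lemma pair_count_0 [simp]: "pair_count 0 s = 0"
  by (simp add: pair_count_def)

lemma pair_count_Suc:
  "pair_count (Suc r) s = pair_count r s + (if r + 2 \<le> s \<and> s \<le> 2 * r + 1 then 2 else 0)"
  by (cases "s = 2 * r + 1 \<or> s = 2 * r + 2") (auto simp: pair_count_def)

lemma pair_sum_eq_sum_pair_count:
  assumes "2 * r < M"
  shows "2 * pair_sum g r = (\<Sum>s<M. pair_count r s * g s)"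
  using assms
proof (induction r)
  case (Suc r)
  have "(\<Sum>s<M. pair_count (Suc r) s * g s)
      = (\<Sum>s<M. pair_count r s * g s) + (\<Sum>s<M. if s \<in> {r + 2..2 * r + 1} then 2 * g s else 0)"
    unfolding sum.distrib[symmetric] by (rule sum.cong) (auto simp: pair_count_Suc algebra_simps)
  also have "(\<Sum>s<M. if s \<in> {r + 2..2 * r + 1} then 2 * g s else 0)
      = (\<Sum>s\<in>{..<M} \<inter> {r + 2..2 * r + 1}. 2 * g s)"
    by (simp add: sum.inter_restrict)
  also have "{..<M} \<inter> {r + 2..2 * r + 1} = {1 + Suc r..r + Suc r}"
    using Suc.prems by auto
  also have "(\<Sum>s\<in>{1 + Suc r..r + Suc r}. 2 * g s) = 2 * (\<Sum>a\<in>{1..r}. g (a + Suc r))"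
    by (simp only: sum.shift_bounds_cl_nat_ivl sum_distrib_left)
  finally show ?case
    using Suc by (simp add: pair_sum_Suc)
qed simp

lemma sum_pair_count_multiples:
  assumes "odd p" "r < p"
  shows "(\<Sum>s<2 * p + 1. pair_count r s * (if p dvd s then 1 else 0)) = max 0 (2 * int r - int p + 1)"
proof -
  have "pair_count r s * (if p dvd s then 1 else 0) = (if s = p then pair_count r p else 0)"
    if "s < 2 * p + 1" for s
  proof (cases "p dvd s \<and> s \<noteq> p")
    case True
    then obtain k where k: "s = p * k" "k \<noteq> 1"
      by auto
    have "p * k < p * 3"
      using that k odd_pos[OF \<open>odd p\<close>] by linarith
    then have "k = 0 \<or> k = 2"
      using k(2) by auto
    with k assms(2) show ?thesis
      by (auto simp: pair_count_def)
  qed auto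
  then have "(\<Sum>s<2 * p + 1. pair_count r s * (if p dvd s then 1 else 0))
      = (\<Sum>s<2 * p + 1. if s = p then pair_count r p else 0)"
    by (intro sum.cong) simp_all
  also have "\<dots> = max 0 (2 * int r - int p + 1)"
    using assms by (auto simp: pair_count_def)
  finally show ?thesis .
qed

definition legendre_weight :: "nat \<Rightarrow> nat \<Rightarrow> int" where
  "legendre_weight p s = (if p dvd s then 1 else 0) - Legendre (int s) (int p)"

lemma legendre_weight_periodic: "legendre_weight p (s + p) = legendre_weight p s"
  using Legendre_cong[of "int (s + p)" "int s" "int p"]
  by (simp add: legendre_weight_def cong_def)

lemma sum_legendre_weight_period:
  assumes "prime p" "odd p"
  shows "(\<Sum>s<p. legendre_weight p s) = 1"
proof -
  have "(\<Sum>s<p. if p dvd s then 1 else 0 :: int) = (\<Sum>s<p. if s = 0 then 1 else 0)"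
    by (intro sum.cong) (auto dest: dvd_imp_le)
  then show ?thesis
    using assms sum_Legendre_period[OF assms] prime_gt_0_nat
    by (simp add: legendre_weight_def sum_subtractf)
qed

lemma sum_legendre_weight_double_period:
  assumes "prime p" "odd p"
  shows "(\<Sum>a<p. legendre_weight p (2 * a)) = 1"
proof -
  have p: "2 < p"
    using assms prime_ge_2_nat[of p] by (auto elim!: oddE)
  have "legendre_weight p (2 * a)
      = (if a = 0 then 1 else 0) - Legendre 2 (int p) * Legendre (int a) (int p)" if "a < p" for a
  proof -
    have "p dvd 2 * a \<longleftrightarrow> p dvd a"
      using assms(1) p prime_dvd_mult_iff[of p 2 a] by (auto dest: dvd_imp_le)
    also have "\<dots> \<longleftrightarrow> a = 0"
      using that by (auto dest: dvd_imp_le)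
    finally show ?thesis
      using Legendre_mult[OF assms(1) p, of 2 "int a"] by (simp add: legendre_weight_def)
  qed
  then have "(\<Sum>a<p. legendre_weight p (2 * a))
      = (\<Sum>a<p. (if a = 0 then 1 else 0) - Legendre 2 (int p) * Legendre (int a) (int p))"
    by (intro sum.cong) simp_all
  also have "\<dots> = 1 - Legendre 2 (int p) * (\<Sum>a<p. Legendre (int a) (int p))"
    using p by (simp add: sum_subtractf sum_distrib_left)
  finally show ?thesis
    using sum_Legendre_period[OF assms] by simp
qed

lemma pair_sum_legendre_weight_less_prime:
  assumes "prime p" "odd p" "r < p"
  shows "2 * pair_sum (legendre_weight p) r = max 0 (2 * int r - int p + 1)
     - ((\<Sum>s\<in>{2..r+1} - {p}. (int s - 1 - (if even s then 1 else 0)) * Legendre (int s) (int p))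
      + (\<Sum>s\<in>{r+2..2*r} - {p}. (2 * int r - int s + 1 - (if even s then 1 else 0)) * Legendre (int s) (int p)))"
proof -
  define L where "L s = Legendre (int s) (int p)" for s
  define h1 where "h1 s = (int s - 1 - (if even s then 1 else 0)) * L s" for s
  define h2 where "h2 s = (2 * int r - int s + 1 - (if even s then 1 else 0)) * L s" for s
  have "L p = 0"
    unfolding L_def by (simp add: Legendre_eq_0_iff)
  have "2 * pair_sum (legendre_weight p) r = (\<Sum>s<2 * p + 1. pair_count r s * legendre_weight p s)"
    using assms(3) by (intro pair_sum_eq_sum_pair_count) simp
  also have "\<dots> = (\<Sum>s<2 * p + 1. pair_count r s * (if p dvd s then 1 else 0)) - (\<Sum>s<2 * p + 1. pair_count r s * L s)"
    by (simp add: legendre_weight_def L_def sum_subtractf algebra_simps)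
  also have "(\<Sum>s<2 * p + 1. pair_count r s * (if p dvd s then 1 else 0)) = max 0 (2 * int r - int p + 1)"
    using assms(2,3) by (rule sum_pair_count_multiples)
  also have "(\<Sum>s<2 * p + 1. pair_count r s * L s)
      = (\<Sum>s<2 * p + 1. (if s \<in> {2..r+1} then h1 s else 0) + (if s \<in> {r+2..2*r} then h2 s else 0))"
    by (rule sum.cong) (auto simp: pair_count_def h1_def h2_def)
  also have "\<dots> = (\<Sum>s\<in>{..<2 * p + 1} \<inter> {2..r+1}. h1 s) + (\<Sum>s\<in>{..<2 * p + 1} \<inter> {r+2..2*r}. h2 s)"
    by (simp add: sum.distrib sum.inter_restrict)
  also have "{..<2 * p + 1} \<inter> {2..r+1} = {2..r+1}"
    using assms(3) by auto
  also have "{..<2 * p + 1} \<inter> {r+2..2*r} = {r+2..2*r}"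
    using assms(3) by auto
  also have "(\<Sum>s\<in>{2..r+1}. h1 s) + (\<Sum>s\<in>{r+2..2*r}. h2 s)
      = (\<Sum>s\<in>{2..r+1} - {p}. h1 s) + (\<Sum>s\<in>{r+2..2*r} - {p}. h2 s)"
    using \<open>L p = 0\<close> by (simp add: sum_diff1 h1_def h2_def)
  finally show ?thesis
    unfolding h1_def h2_def L_def .
qed

lemma complete_edges_subset_Pow: "complete_edges V \<subseteq> Pow V"
  by (auto simp: complete_edges_def)

lemma complete_edges_image:
  assumes "bij_betw f V W"
  shows "bij_betw ((`) f) (complete_edges V) (complete_edges W)"
proof (rule bij_betw_imageI)
  have inj: "inj_on f V" and surj: "f ` V = W"
    using assms by (auto simp: bij_betw_def)
  then have "inj_on f (\<Union> (complete_edges V))"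
    using complete_edges_subset_Pow by (blast intro: inj_on_subset)
  then show "inj_on ((`) f) (complete_edges V)"
    by (rule inj_on_image)
  show "(`) f ` complete_edges V = complete_edges W"
  proof (intro equalityI subsetI)
    fix e assume "e \<in> (`) f ` complete_edges V"
    then obtain u v where "e = {f u, f v}" "u \<in> V" "v \<in> V" "u \<noteq> v"
      unfolding complete_edges_def by auto
    with inj surj show "e \<in> complete_edges W"
      unfolding complete_edges_def inj_on_def by blast
  next
    fix e assume "e \<in> complete_edges W"
    then obtain u v where "e = {f u, f v}" "u \<in> V" "v \<in> V" "f u \<noteq> f v"
      using surj unfolding complete_edges_def by auto
    then show "e \<in> (`) f ` complete_edges V"
      unfolding complete_edges_def by (auto intro!: image_eqI[where x = "{u, v}"])
  qed
qed

lemma sum_complete_edges_interval: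
  "(\<Sum>e\<in>complete_edges {1..n}. h e) = (\<Sum>b\<in>{1..n}. \<Sum>a\<in>{1..<b}. h {a, b::nat})"
proof -
  have "bij_betw (\<lambda>(b, a). {a, b}) (SIGMA b:{1..n}. {1..<b}) (complete_edges {1..n})"
  proof (rule bij_betw_imageI)
    show "inj_on (\<lambda>(b, a). {a, b::nat}) (SIGMA b:{1..n}. {1..<b})"
      by (rule inj_onI) (auto simp: doubleton_eq_iff)
    show "(\<lambda>(b, a). {a, b}) ` (SIGMA b:{1..n}. {1..<b}) = complete_edges {1..n}"
    proof (intro equalityI subsetI)
      fix e assume "e \<in> (\<lambda>(b, a). {a, b}) ` (SIGMA b:{1..n}. {1..<b})"
      then show "e \<in> complete_edges {1..n}"
        unfolding complete_edges_def by fastforce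
    next
      fix e assume "e \<in> complete_edges {1..n}"
      then obtain x y where xy: "e = {x, y}" "x \<in> {1..n}" "y \<in> {1..n}" "x \<noteq> y"
        unfolding complete_edges_def by blast
      then have "e = (\<lambda>(b, a). {a, b}) (max x y, min x y)"
        by (auto simp: max_def min_def)
      moreover have "(max x y, min x y) \<in> (SIGMA b:{1..n}. {1..<b})"
        using xy by (auto simp: max_def min_def)
      ultimately show "e \<in> (\<lambda>(b, a). {a, b}) ` (SIGMA b:{1..n}. {1..<b})"
        by blast
    qed
  qed
  then have "(\<Sum>e\<in>complete_edges {1..n}. h e) = (\<Sum>(b, a)\<in>(SIGMA b:{1..n}. {1..<b}). h {a, b})"
    by (simp add: sum.reindex_bij_betw[symmetric] case_prod_unfold)
  then show ?thesis
    by (simp add: sum.Sigma)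
qed

lemma legendre_weight_sign:
  "legendre_weight p s = (if int p dvd int s \<or> Legendre (int s) (int p) = -1 then 1 else -1)"
  using Legendre_cases[of "int s" "int p"] Legendre_eq_0_iff[of "int s" "int p"]
  by (auto simp: legendre_weight_def)

lemma edge_label_cases: "edge_label p f e = 0 \<or> edge_label p f e = 1"
  by (simp add: edge_label_def Let_def)

lemma edge_count_diff_eq_pair_sum:
  assumes "bij_betw f V {1..n}"
  shows "int (edge_count p f V 0) - int (edge_count p f V 1) = pair_sum (legendre_weight p) n"
proof -
  have "finite V"
    using assms by (simp add: bij_betw_finite)
  then have "finite (complete_edges V)"
    by (meson complete_edges_subset_Pow finite_Pow_iff finite_subset)
  moreover have "{e \<in> complete_edges V. edge_label p f e \<noteq> 0} = {e \<in> complete_edges V. edge_label p f e = 1}"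
    using edge_label_cases[of p f] by (metis (lifting) zero_neq_one)
  ultimately have "int (edge_count p f V 0) - int (edge_count p f V 1)
      = (\<Sum>e\<in>complete_edges V. if edge_label p f e = 0 then 1 else -1)"
    by (simp add: sum_sign_eq_card_diff edge_count_def)
  also have "\<dots> = (\<Sum>e\<in>complete_edges V. legendre_weight p (\<Sum>x\<in>f ` e. x))"
  proof (rule sum.cong)
    fix e assume "e \<in> complete_edges V"
    then have "e \<subseteq> V"
      using complete_edges_subset_Pow by blast
    with inj_on_subset[OF bij_betw_imp_inj_on[OF assms]] have "inj_on f e"
      by blast
    then have "(\<Sum>x\<in>f ` e. x) = sum f e"
      by (simp add: sum.reindex)
    then show "(if edge_label p f e = 0 then 1 else -1) = legendre_weight p (\<Sum>x\<in>f ` e. x)"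
      unfolding edge_label_def Let_def legendre_weight_sign by simp
  qed simp
  also have "\<dots> = (\<Sum>e\<in>complete_edges {1..n}. legendre_weight p (\<Sum>x\<in>e. x))"
    by (rule sum.reindex_bij_betw[OF complete_edges_image[OF assms]])
  also have "\<dots> = (\<Sum>b\<in>{1..n}. \<Sum>a\<in>{1..<b}. legendre_weight p (\<Sum>x\<in>{a, b}. x))"
    by (rule sum_complete_edges_interval)
  also have "\<dots> = pair_sum (legendre_weight p) n"
    unfolding pair_sum_def by (intro sum.cong refl) simp
  finally show ?thesis .
qed

theorem mainTheorem5:
  fixes p n :: nat and V :: "'a set" and f :: "'a \<Rightarrow> nat"
  assumes "prime p" and "odd p" and "n \<ge> 1"
    and "bij_betw f V {1..n}"
  shows "let q = n div p; r = n - q * p;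
             \<psi> = max 0 (2 * int r - int p + 1);
             \<delta> = (\<lambda>s::nat. if even s then 1 else 0 :: int);
             S1 = (\<Sum>s\<in>{2..r+1} - {p}. (int s - 1 - \<delta> s) * Legendre (int s) (int p));
             S2 = (\<Sum>s\<in>{r+2..2*r} - {p}. (2 * int r - int s + 1 - \<delta> s) * Legendre (int s) (int p));
             S = S1 + S2
         in real (edge_count p f V 0) - real (edge_count p f V 1)
            = (real_of_int (2 * int n * int q - int p * int q ^ 2 - int q + \<psi>)) / 2
              - real_of_int S / 2"
proof -
  define q where "q = n div p"
  define r where "r = n - q * p"
  define \<psi> where "\<psi> = max 0 (2 * int r - int p + 1)"
  define S where "S = (\<Sum>s\<in>{2..r+1} - {p}. (int s - 1 - (if even s then 1 else 0)) * Legendre (int s) (int p))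
    + (\<Sum>s\<in>{r+2..2*r} - {p}. (2 * int r - int s + 1 - (if even s then 1 else 0)) * Legendre (int s) (int p))"
  define X where "X = 2 * int n * int q - int p * int q ^ 2 - int q + \<psi>"
  have "r = n mod p"
    unfolding r_def q_def by (simp add: minus_div_mult_eq_mod)
  then have n_eq: "n = r + q * p" and "r < p"
    using prime_gt_0_nat[OF assms(1)] unfolding q_def by simp_all
  have "2 * pair_sum (legendre_weight p) n = 2 * pair_sum (legendre_weight p) r + 2 * int q * int r + int p * int q ^ 2 - int q"
    using pair_sum_add_periods[of "legendre_weight p" p r q] legendre_weight_periodic
      sum_legendre_weight_period[OF assms(1,2)] sum_legendre_weight_double_period[OF assms(1,2)] n_eq
    by simp
  also have "2 * pair_sum (legendre_weight p) r = \<psi> - S"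
    unfolding \<psi>_def S_def using assms(1,2) \<open>r < p\<close> by (rule pair_sum_legendre_weight_less_prime)
  finally have "2 * (int (edge_count p f V 0) - int (edge_count p f V 1)) = X - S"
    using edge_count_diff_eq_pair_sum[OF assms(4)] n_eq unfolding X_def
    by (simp add: algebra_simps power2_eq_square)
  then have "2 * (real (edge_count p f V 0) - real (edge_count p f V 1)) = real_of_int X - real_of_int S"
    by (metis of_int_diff of_int_mult of_int_numeral of_int_of_nat_eq)
  then show ?thesis
    unfolding Let_def q_def[symmetric] r_def[symmetric] \<psi>_def[symmetric] X_def[symmetric] S_def[symmetric]
    by (simp add: field_simps)
qed

end
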